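(* Let $Q=[u_1,\dots,u_n]\subset\mathbb{S}^2$ with $n\ge 6$ be a spherical polygon not contained in any closed hemisphere, without self-intersections and antipodal intersections, with exactly three essential vertices. Then no two of the three essential vertices are consecutive in $Q$.
   Context: A spherical polygon has edges the minimal great-circle arcs between consecutive vertices (indices mod $n$); no three vertices lie on a common great circle. A set is balanced if not contained in any closed hemisphere; for balanced $Q$, $u_m$ is essential if the vertex set minus $u_m$ is not balanced. Self-intersection: two non-adjacent edges intersect; antipodal intersection: non-adjacent edges $e,f$ with $e\cap(-f)\neq\emptyset$. *)

theory Defs
  imports "HOL-Analysis.Analysis"
begin

text \<open>Spherical polygon: vertices u 0, ..., u (n-1) on the unit sphere in R^3,
  indices taken mod n.\<close>

definition on_sphere :: "real^3 \<Rightarrow> bool" where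
  "on_sphere x \<longleftrightarrow> norm x = 1"

text \<open>Minimal great-circle arc between two non-antipodal unit vectors:
  the unit vectors in the cone spanned by them.\<close>
definition sarc :: "real^3 \<Rightarrow> real^3 \<Rightarrow> (real^3) set" where
  "sarc a b = {x. norm x = 1 \<and> (\<exists>s t. s \<ge> 0 \<and> t \<ge> 0 \<and> x = s *\<^sub>R a + t *\<^sub>R b)}"

definition edge :: "(nat \<Rightarrow> real^3) \<Rightarrow> nat \<Rightarrow> nat \<Rightarrow> (real^3) set" where
  "edge u n i = sarc (u i) (u (Suc i mod n))"

definition common_great_circle :: "real^3 \<Rightarrow> real^3 \<Rightarrow> real^3 \<Rightarrow> bool" where
  "common_great_circle a b c \<longleftrightarrow> (\<exists>w. w \<noteq> 0 \<and> w \<bullet> a = 0 \<and> w \<bullet> b = 0 \<and> w \<bullet> c = 0)"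

definition in_closed_hemisphere :: "(real^3) set \<Rightarrow> bool" where
  "in_closed_hemisphere S \<longleftrightarrow> (\<exists>v. v \<noteq> 0 \<and> (\<forall>x\<in>S. v \<bullet> x \<ge> 0))"

definition balanced :: "(real^3) set \<Rightarrow> bool" where
  "balanced S \<longleftrightarrow> \<not> in_closed_hemisphere S"

definition vertices :: "(nat \<Rightarrow> real^3) \<Rightarrow> nat \<Rightarrow> (real^3) set" where
  "vertices u n = u ` {..<n}"

definition essential :: "(nat \<Rightarrow> real^3) \<Rightarrow> nat \<Rightarrow> nat \<Rightarrow> bool" where
  "essential u n m \<longleftrightarrow> \<not> balanced (vertices u n - {u m})"

definition nonadjacent :: "nat \<Rightarrow> nat \<Rightarrow> nat \<Rightarrow> bool" where
  "nonadjacent n i j \<longleftrightarrow> i < n \<and> j < n \<and> i \<noteq> j \<and> Suc i mod n \<noteq> j \<and> Suc j mod n \<noteq> i"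

definition self_intersecting :: "(nat \<Rightarrow> real^3) \<Rightarrow> nat \<Rightarrow> bool" where
  "self_intersecting u n \<longleftrightarrow>
     (\<exists>i j. nonadjacent n i j \<and> edge u n i \<inter> edge u n j \<noteq> {})"

definition antipodal_intersecting :: "(nat \<Rightarrow> real^3) \<Rightarrow> nat \<Rightarrow> bool" where
  "antipodal_intersecting u n \<longleftrightarrow>
     (\<exists>i j. nonadjacent n i j \<and> edge u n i \<inter> uminus ` edge u n j \<noteq> {})"

end

theory Submission
  imports Defs
begin

text \<open>Suppose two consecutive vertices \<open>a = u i\<close> and \<open>b = u (i + 1)\<close> are both essential, and let
  \<open>C\<close> be the great circle through them, with pole \<open>a \<times> b\<close>. Essentiality of \<open>a\<close> gives a
  hemisphere containing every vertex except \<open>a\<close>, and likewise for \<open>b\<close>. If an edge not adjacent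
  to \<open>[a, b]\<close> crossed \<open>C\<close>, the crossing point would lie in both hemispheres; being a combination
  \<open>\<alpha> a + \<beta> b\<close>, this forces \<open>\<alpha>, \<beta>\<close> to have a common sign, so the point lies on the arc
  \<open>[a, b]\<close> or on its antipode, a forbidden intersection. Hence the path formed by the remaining
  vertices, which by general position avoid \<open>C\<close>, stays strictly on one side of \<open>C\<close>, and all
  vertices lie in a closed hemisphere, contradicting balancedness.\<close>

unbundle cross3_syntax

lemma orthogonal_to_two_exists:
  fixes a b :: "real^3"
  obtains w where "w \<noteq> 0" "w \<bullet> a = 0" "w \<bullet> b = 0"
proof -
  have "dim {a, b} \<le> card {a, b}"
    by (rule dim_le_card) (auto intro: span_base)
  also have "\<dots> < DIM(real^3)"
    by (simp add: card_insert_if)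
  finally obtain w where "w \<noteq> 0" "\<And>y. y \<in> span {a, b} \<Longrightarrow> orthogonal w y"
    using orthogonal_to_subspace_exists by blast
  then show ?thesis
    using that by (simp add: orthogonal_def span_base)
qed

lemma cross_eq_0_imp_common_great_circle:
  fixes a b c :: "real^3"
  assumes "a \<times> b = 0"
  shows "common_great_circle a b c"
proof -
  have "a = 0 \<or> b = 0 \<or> (\<exists>k. b = k *\<^sub>R a)"
    using assms by (simp add: cross_eq_0 collinear_lemma)
  then show ?thesis
    unfolding common_great_circle_def
    by (elim disjE exE; metis orthogonal_to_two_exists inner_zero_right inner_scaleR_right mult_zero_right)
qed

lemma cross_decomposition:
  fixes a b y :: "real^3"
  shows "((a \<times> b) \<bullet> (a \<times> b)) *\<^sub>R y =
    ((y \<times> b) \<bullet> (a \<times> b)) *\<^sub>R a + ((a \<times> y) \<bullet> (a \<times> b)) *\<^sub>R b + (y \<bullet> (a \<times> b)) *\<^sub>R (a \<times> b)"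
  by (simp add: cross3_simps forall_3)

lemma orthogonal_cross_imp_in_plane:
  fixes a b y :: "real^3"
  assumes "a \<times> b \<noteq> 0" "(a \<times> b) \<bullet> y = 0"
  obtains \<alpha> \<beta> where "y = \<alpha> *\<^sub>R a + \<beta> *\<^sub>R b"
proof
  let ?N = "(a \<times> b) \<bullet> (a \<times> b)"
  have "?N *\<^sub>R y = ?N *\<^sub>R ((((y \<times> b) \<bullet> (a \<times> b)) / ?N) *\<^sub>R a + (((a \<times> y) \<bullet> (a \<times> b)) / ?N) *\<^sub>R b)"
    using cross_decomposition[of a b y] assms by (simp add: inner_commute scaleR_add_right)
  then show "y = (((y \<times> b) \<bullet> (a \<times> b)) / ?N) *\<^sub>R a + (((a \<times> y) \<bullet> (a \<times> b)) / ?N) *\<^sub>R b"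
    using assms(1) by simp
qed

lemma normalized_in_sarc:
  fixes a b y :: "real^3"
  assumes "y \<noteq> 0" "s \<ge> 0" "t \<ge> 0" "y = s *\<^sub>R a + t *\<^sub>R b"
  shows "y /\<^sub>R norm y \<in> sarc a b"
proof -
  have "y /\<^sub>R norm y = (s / norm y) *\<^sub>R a + (t / norm y) *\<^sub>R b"
    using assms(4) by (simp add: scaleR_add_right divide_inverse_commute)
  moreover have "norm (y /\<^sub>R norm y) = 1"
    using assms(1) by simp
  moreover have "s / norm y \<ge> 0" "t / norm y \<ge> 0"
    using assms(2,3) by simp_all
  ultimately show ?thesis
    unfolding sarc_def by blast
qed

lemma hemispheres_force_same_sign:
  fixes a b va vb :: "real^3"
  assumes "va \<bullet> a < 0" "va \<bullet> b \<ge> 0" "vb \<bullet> b < 0" "vb \<bullet> a \<ge> 0"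
    and "va \<bullet> (\<alpha> *\<^sub>R a + \<beta> *\<^sub>R b) \<ge> 0" "vb \<bullet> (\<alpha> *\<^sub>R a + \<beta> *\<^sub>R b) \<ge> 0"
  shows "(\<alpha> \<ge> 0 \<and> \<beta> \<ge> 0) \<or> (\<alpha> \<le> 0 \<and> \<beta> \<le> 0)"
proof (rule ccontr)
  assume "\<not> ?thesis"
  then consider "\<alpha> > 0" "\<beta> < 0" | "\<alpha> < 0" "\<beta> > 0"
    by linarith
  then show False
  proof cases
    case 1
    then have "\<alpha> * (va \<bullet> a) < 0" "\<beta> * (va \<bullet> b) \<le> 0"
      using assms(1,2) by (simp_all add: mult_pos_neg mult_nonpos_nonneg)
    then show False
      using assms(5) by (simp add: inner_add_right)
  next
    case 2
    then have "\<beta> * (vb \<bullet> b) < 0" "\<alpha> * (vb \<bullet> a) \<le> 0"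
      using assms(3,4) by (simp_all add: mult_pos_neg mult_nonpos_nonneg)
    then show False
      using assms(6) by (simp add: inner_add_right)
  qed
qed

lemma sarc_crossing_meets_sarc_or_antipode:
  fixes a b c d va vb :: "real^3"
  assumes ab: "a \<times> b \<noteq> 0" and cd: "c \<times> d \<noteq> 0"
    and va: "va \<bullet> a < 0" "va \<bullet> b \<ge> 0" "va \<bullet> c \<ge> 0" "va \<bullet> d \<ge> 0"
    and vb: "vb \<bullet> b < 0" "vb \<bullet> a \<ge> 0" "vb \<bullet> c \<ge> 0" "vb \<bullet> d \<ge> 0"
    and crossing: "((a \<times> b) \<bullet> c) * ((a \<times> b) \<bullet> d) < 0"
  shows "sarc c d \<inter> sarc a b \<noteq> {} \<or> sarc c d \<inter> uminus ` sarc a b \<noteq> {}"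
proof -
  define p where "p = (a \<times> b) \<bullet> c"
  define q where "q = (a \<times> b) \<bullet> d"
  define y where "y = \<bar>q\<bar> *\<^sub>R c + \<bar>p\<bar> *\<^sub>R d"
  have p: "\<bar>p\<bar> > 0" and q: "\<bar>q\<bar> > 0"
    using crossing by (auto simp: p_def q_def)
  have "(a \<times> b) \<bullet> y = 0"
    using crossing by (auto simp: y_def p_def q_def inner_add_right mult_less_0_iff)
  then obtain \<alpha> \<beta> where y_plane: "y = \<alpha> *\<^sub>R a + \<beta> *\<^sub>R b"
    using orthogonal_cross_imp_in_plane[OF ab] by blast
  have "c \<times> y = \<bar>p\<bar> *\<^sub>R (c \<times> d)"
    by (simp add: y_def cross_add_right cross_mult_right)
  then have "y \<noteq> 0"
    using p cd by auto
  then have z_cd: "y /\<^sub>R norm y \<in> sarc c d"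
    using p q by (intro normalized_in_sarc[where s = "\<bar>q\<bar>" and t = "\<bar>p\<bar>"]) (auto simp: y_def)
  have "va \<bullet> y \<ge> 0" "vb \<bullet> y \<ge> 0"
    using va vb by (simp_all add: y_def inner_add_right)
  then consider "\<alpha> \<ge> 0" "\<beta> \<ge> 0" | "\<alpha> \<le> 0" "\<beta> \<le> 0"
    using hemispheres_force_same_sign[OF va(1,2) vb(1,2)] y_plane by blast
  then show ?thesis
  proof cases
    case 1
    then have "y /\<^sub>R norm y \<in> sarc a b"
      using \<open>y \<noteq> 0\<close> y_plane by (intro normalized_in_sarc) auto
    then show ?thesis
      using z_cd by blast
  next
    case 2
    have "- y = (- \<alpha>) *\<^sub>R a + (- \<beta>) *\<^sub>R b"
      by (simp add: y_plane)
    then have "(- y) /\<^sub>R norm (- y) \<in> sarc a b"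
      by (rule normalized_in_sarc[rotated 3]) (use 2 \<open>y \<noteq> 0\<close> in auto)
    then have "y /\<^sub>R norm y \<in> uminus ` sarc a b"
      by (metis image_eqI minus_minus norm_minus_cancel scaleR_minus_right)
    then show ?thesis
      using z_cd by blast
  qed
qed

lemma balanced_imp_negative_inner:
  assumes "balanced S" "w \<noteq> 0"
  shows "\<exists>x\<in>S. w \<bullet> x < 0"
  using assms unfolding balanced_def in_closed_hemisphere_def by (meson not_le)

lemma essential_point_hemisphere:
  assumes "balanced S" "\<not> balanced (S - {x})"
  obtains v where "v \<bullet> x < 0" "\<And>y. y \<in> S - {x} \<Longrightarrow> v \<bullet> y \<ge> 0"
proof -
  obtain v where v: "v \<noteq> 0" "\<And>y. y \<in> S - {x} \<Longrightarrow> v \<bullet> y \<ge> 0"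
    using assms(2) unfolding balanced_def in_closed_hemisphere_def by blast
  obtain y where "y \<in> S" "v \<bullet> y < 0"
    using balanced_imp_negative_inner[OF assms(1) v(1)] by blast
  with v(2) have "y = x"
    by fastforce
  with \<open>v \<bullet> y < 0\<close> v(2) show ?thesis
    using that by blast
qed

lemma mod_shift_avoids_edge:
  fixes i n d :: nat
  assumes "i < n" "d + 2 < n"
  shows "(i + 2 + d) mod n \<noteq> i" "(i + 2 + d) mod n \<noteq> Suc i mod n"
proof -
  have Suc_i: "Suc i mod n = (if Suc i = n then 0 else Suc i)"
    using assms by (simp add: mod_Suc)
  have "i + 2 + d < n \<or> (i + 2 + d) mod n = i + 2 + d - n"
    using assms by (auto simp: mod_if)
  then show "(i + 2 + d) mod n \<noteq> i" "(i + 2 + d) mod n \<noteq> Suc i mod n"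
    using assms Suc_i by auto
qed

lemma mod_shift_covers:
  fixes i j n :: nat
  assumes "i < n" "j < n" "j \<noteq> i" "j \<noteq> Suc i mod n"
  obtains d where "d + 2 < n" "(i + 2 + d) mod n = j"
proof (cases "i + 2 \<le> j")
  case True
  with assms show ?thesis
    using that[of "j - i - 2"] by auto
next
  case False
  have Suc_i: "Suc i mod n = (if Suc i = n then 0 else Suc i)"
    using assms by (simp add: mod_Suc)
  with False assms have "j < i" "2 \<le> j + n - i"
    by (auto split: if_splits)
  then have "j + n - i - 2 + 2 < n" and sum: "i + 2 + (j + n - i - 2) = j + n"
    using assms by auto
  moreover have "(i + 2 + (j + n - i - 2)) mod n = j"
    unfolding sum using assms(2) by simp
  ultimately show ?thesis
    using that by blast
qed

lemma sign_constant_on_cycle_minus_edge: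
  fixes f :: "nat \<Rightarrow> real" and i n :: nat
  defines "E \<equiv> {i, Suc i mod n}"
  assumes "i < n"
    and step: "\<And>j. j < n \<Longrightarrow> j \<notin> E \<Longrightarrow> Suc j mod n \<notin> E \<Longrightarrow> f j * f (Suc j mod n) > 0"
    and "j < n" "j \<notin> E" "k < n" "k \<notin> E"
  shows "f j > 0 \<longleftrightarrow> f k > 0"
proof -
  define idx where "idx d = (i + 2 + d) mod n" for d
  have idx_avoids: "idx d < n" "idx d \<notin> E" if "d + 2 < n" for d
    using mod_shift_avoids_edge[OF \<open>i < n\<close> that] that unfolding idx_def E_def by auto
  have "f (idx d) > 0 \<longleftrightarrow> f (idx 0) > 0" if "d + 2 < n" for d
    using that
  proof (induction d)
    case (Suc d)
    have "Suc (idx d) mod n = idx (Suc d)"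
      unfolding idx_def by (simp add: mod_Suc_eq)
    then have "f (idx d) * f (idx (Suc d)) > 0"
      using step[of "idx d"] idx_avoids[of d] idx_avoids[of "Suc d"] Suc.prems by simp
    with Suc show ?case
      by (auto simp: zero_less_mult_iff)
  qed simp
  moreover have "\<exists>d. d + 2 < n \<and> idx d = m" if "m < n" "m \<notin> E" for m
    using mod_shift_covers[OF \<open>i < n\<close> that(1)] that(2) unfolding idx_def E_def by blast
  ultimately show ?thesis
    using assms(4-7) by metis
qed

definition general_position :: "(nat \<Rightarrow> real^3) \<Rightarrow> nat \<Rightarrow> bool" where
  "general_position u n \<longleftrightarrow>
     (\<forall>i<n. \<forall>j<n. \<forall>k<n. i \<noteq> j \<and> j \<noteq> k \<and> i \<noteq> k \<longrightarrow> \<not> common_great_circle (u i) (u j) (u k))"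

lemma general_position_cross_nonzero:
  assumes "general_position u n" "3 \<le> n" "i < n" "j < n" "i \<noteq> j"
  shows "u i \<times> u j \<noteq> 0"
proof -
  have "\<exists>k\<in>{0, 1, 2}. k \<noteq> i \<and> k \<noteq> j"
    by auto
  then obtain k where "k \<in> {0, 1, 2}" "k \<noteq> i" "k \<noteq> j"
    by blast
  with assms have "\<not> common_great_circle (u i) (u j) (u k)"
    unfolding general_position_def by auto
  then show ?thesis
    using cross_eq_0_imp_common_great_circle by blast
qed

lemma general_position_inner_nonzero:
  assumes "general_position u n" "i < n" "j < n" "k < n" "i \<noteq> j" "k \<noteq> i" "k \<noteq> j"
    and "w \<noteq> 0" "w \<bullet> u i = 0" "w \<bullet> u j = 0"
  shows "w \<bullet> u k \<noteq> 0"
  using assms unfolding general_position_def common_great_circle_def by blast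

lemma essential_vertex_hemisphere:
  assumes "balanced (vertices u n)" "essential u n m" "inj_on u {..<n}" "m < n"
  obtains v where "v \<bullet> u m < 0" "\<And>j. j < n \<Longrightarrow> j \<noteq> m \<Longrightarrow> v \<bullet> u j \<ge> 0"
proof -
  obtain v where "v \<bullet> u m < 0" "\<And>y. y \<in> vertices u n - {u m} \<Longrightarrow> v \<bullet> y \<ge> 0"
    using essential_point_hemisphere assms(1,2) unfolding essential_def by blast
  moreover have "u j \<in> vertices u n - {u m}" if "j < n" "j \<noteq> m" for j
    using that assms(3,4) unfolding vertices_def by (auto dest: inj_onD)
  ultimately show ?thesis
    using that by blast
qed

lemma general_position_inj_on:
  assumes "general_position u n" "3 \<le> n"
  shows "inj_on u {..<n}"
proof (rule inj_onI)
  fix j k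
  assume "j \<in> {..<n}" "k \<in> {..<n}" "u j = u k"
  then show "j = k"
    using general_position_cross_nonzero[OF assms, of j k] by auto
qed

lemma edge_stays_off_great_circle_of_essential_edge:
  fixes u :: "nat \<Rightarrow> real^3" and n i j :: nat
  defines "i' \<equiv> Suc i mod n" and "j' \<equiv> Suc j mod n"
  defines "w \<equiv> u i \<times> u i'"
  assumes "3 \<le> n" and gp: "general_position u n" and bal: "balanced (vertices u n)"
    and "\<not> self_intersecting u n" "\<not> antipodal_intersecting u n"
    and "i < n" "essential u n i" "essential u n i'"
    and "j < n" "j \<notin> {i, i'}" "j' \<notin> {i, i'}"
  shows "(w \<bullet> u j) * (w \<bullet> u j') > 0"
proof -
  have "i' < n" "i \<noteq> i'" "j' < n" "j \<noteq> j'"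
    using \<open>i < n\<close> \<open>j < n\<close> \<open>3 \<le> n\<close> by (auto simp: i'_def j'_def mod_Suc)
  have cross: "u k \<times> u l \<noteq> 0" if "k < n" "l < n" "k \<noteq> l" for k l
    using general_position_cross_nonzero[OF gp \<open>3 \<le> n\<close> that] .
  have inj: "inj_on u {..<n}"
    using general_position_inj_on[OF gp \<open>3 \<le> n\<close>] .
  obtain va where va: "va \<bullet> u i < 0" "\<And>k. k < n \<Longrightarrow> k \<noteq> i \<Longrightarrow> va \<bullet> u k \<ge> 0"
    using essential_vertex_hemisphere[OF bal \<open>essential u n i\<close> inj \<open>i < n\<close>] by blast
  obtain vb where vb: "vb \<bullet> u i' < 0" "\<And>k. k < n \<Longrightarrow> k \<noteq> i' \<Longrightarrow> vb \<bullet> u k \<ge> 0"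
    using essential_vertex_hemisphere[OF bal \<open>essential u n i'\<close> inj \<open>i' < n\<close>] by blast
  have "nonadjacent n j i"
    using \<open>i < n\<close> \<open>j < n\<close> \<open>j \<notin> {i, i'}\<close> \<open>j' \<notin> {i, i'}\<close>
    unfolding nonadjacent_def i'_def j'_def by auto
  then have disjoint: "sarc (u j) (u j') \<inter> sarc (u i) (u i') = {}"
    "sarc (u j) (u j') \<inter> uminus ` sarc (u i) (u i') = {}"
    using assms(7,8) unfolding self_intersecting_def antipodal_intersecting_def edge_def
      i'_def j'_def by blast+
  have "va \<bullet> u i' \<ge> 0" "va \<bullet> u j \<ge> 0" "va \<bullet> u j' \<ge> 0"
    "vb \<bullet> u i \<ge> 0" "vb \<bullet> u j \<ge> 0" "vb \<bullet> u j' \<ge> 0"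
    using va(2) vb(2) \<open>i < n\<close> \<open>i' < n\<close> \<open>i \<noteq> i'\<close> \<open>j < n\<close> \<open>j' < n\<close>
      \<open>j \<notin> {i, i'}\<close> \<open>j' \<notin> {i, i'}\<close> by auto
  then have "\<not> (w \<bullet> u j) * (w \<bullet> u j') < 0"
    using sarc_crossing_meets_sarc_or_antipode[OF cross[OF \<open>i < n\<close> \<open>i' < n\<close> \<open>i \<noteq> i'\<close>]
        cross[OF \<open>j < n\<close> \<open>j' < n\<close> \<open>j \<noteq> j'\<close>] va(1) _ _ _ vb(1)] disjoint
    unfolding w_def by blast
  moreover have "w \<noteq> 0" "w \<bullet> u i = 0" "w \<bullet> u i' = 0"
    using cross[OF \<open>i < n\<close> \<open>i' < n\<close> \<open>i \<noteq> i'\<close>] by (simp_all add: w_def dot_cross_self)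
  then have "w \<bullet> u j \<noteq> 0" "w \<bullet> u j' \<noteq> 0"
    using general_position_inner_nonzero[OF gp \<open>i < n\<close> \<open>i' < n\<close>] \<open>i \<noteq> i'\<close>
      \<open>j < n\<close> \<open>j' < n\<close> \<open>j \<notin> {i, i'}\<close> \<open>j' \<notin> {i, i'}\<close> by auto
  ultimately show ?thesis
    by (simp add: zero_less_mult_iff mult_less_0_iff) linarith
qed

lemma no_consecutive_essential_vertices:
  assumes "3 \<le> n" and gp: "general_position u n" and bal: "balanced (vertices u n)"
    and "\<not> self_intersecting u n" "\<not> antipodal_intersecting u n"
    and "i < n" "essential u n i"
  shows "\<not> essential u n (Suc i mod n)"
proof
  assume "essential u n (Suc i mod n)"
  define i' where "i' = Suc i mod n"
  define w where "w = u i \<times> u i'"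
  have "i' < n" "i \<noteq> i'"
    using \<open>i < n\<close> \<open>3 \<le> n\<close> by (auto simp: i'_def mod_Suc)
  then have w: "w \<noteq> 0" "w \<bullet> u i = 0" "w \<bullet> u i' = 0"
    using general_position_cross_nonzero[OF gp \<open>3 \<le> n\<close> \<open>i < n\<close>]
    by (simp_all add: w_def dot_cross_self)
  have same_side: "w \<bullet> u j > 0 \<longleftrightarrow> w \<bullet> u k > 0"
    if "j < n" "j \<notin> {i, i'}" "k < n" "k \<notin> {i, i'}" for j k
    using sign_constant_on_cycle_minus_edge[OF \<open>i < n\<close>, of "\<lambda>j. w \<bullet> u j"] that
      edge_stays_off_great_circle_of_essential_edge[OF assms(1-6)] \<open>essential u n i\<close>
      \<open>essential u n (Suc i mod n)\<close>
    unfolding w_def i'_def by blast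
  obtain j k where "j < n" "w \<bullet> u j < 0" "k < n" "(- w) \<bullet> u k < 0"
    using balanced_imp_negative_inner[OF bal] w(1) unfolding vertices_def
    by (metis imageE lessThan_iff neg_equal_0_iff_equal)
  moreover have "j \<notin> {i, i'}" "k \<notin> {i, i'}"
    using calculation w by auto
  ultimately show False
    using same_side[of j k] by auto
qed

theorem lemma6:
  fixes u :: "nat \<Rightarrow> real^3" and n :: nat
  assumes "n \<ge> 6"
    and "\<forall>i<n. on_sphere (u i)"
    and "\<forall>i<n. \<forall>j<n. \<forall>k<n. i \<noteq> j \<and> j \<noteq> k \<and> i \<noteq> k \<longrightarrow>
           \<not> common_great_circle (u i) (u j) (u k)"
    and "balanced (vertices u n)"
    and "\<not> self_intersecting u n"
    and "\<not> antipodal_intersecting u n"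
    and "card {m. m < n \<and> essential u n m} = 3"
  shows "\<forall>i<n. \<not> (essential u n i \<and> essential u n (Suc i mod n))"
proof -
  have "3 \<le> n" "general_position u n"
    using assms(1,3) unfolding general_position_def by simp_all
  then show ?thesis
    using no_consecutive_essential_vertices assms(4-6) by blast
qed

end
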